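(* Let $\psi$ be a pure state of a finite-dimensional bipartite system $AB$ with Schmidt coefficients $\psi_j$ (i.e. $|\psi\rangle=\sum_j\psi_j|j\rangle|j\rangle$). Then $R_g(\psi)=R(\psi)=\left(\sum_j\psi_j\right)^2-1$.
   Context: For states $\rho,\sigma$ of $AB$, the robustness of $\rho$ relative to $\sigma$, $R(\rho\|\sigma)$, is the smallest non-negative $t$ such that $\rho+t\sigma$ (equivalently $\frac{1}{1+t}\rho+\frac{t}{1+t}\sigma$) is separable with respect to $A:B$, and $+\infty$ if no such $t$ exists. The robustness is $R(\rho)=\min\{R(\rho\|\sigma):\sigma\text{ a separable state of }AB\}$, and the global robustness is $R_g(\rho)=\min\{R(\rho\|\sigma):\sigma\text{ any density matrix of }AB\}$. A state is separable with respect to $A:B$ if it is a convex combination of product states $\rho^A\otimes\rho^B$. *)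

theory Defs
  imports Complex_Main "HOL-Library.Extended_Real"
begin

text \<open>Operators on a finite-dimensional Hilbert space with orthonormal basis indexed
  by a finite type 'i are represented by their matrices 'i \<Rightarrow> 'i \<Rightarrow> complex;
  kets by 'i \<Rightarrow> complex. System A has basis index type 'a, B has 'b, AB has 'a \<times> 'b.\<close>

type_synonym 'i op = "'i \<Rightarrow> 'i \<Rightarrow> complex"

definition hermitian :: "('i::finite) op \<Rightarrow> bool" where
  "hermitian M \<longleftrightarrow> (\<forall>i j. M i j = cnj (M j i))"

definition psd :: "('i::finite) op \<Rightarrow> bool" where
  "psd M \<longleftrightarrow> hermitian M \<and>
     (\<forall>v :: 'i \<Rightarrow> complex. 0 \<le> Re (\<Sum>i\<in>UNIV. \<Sum>j\<in>UNIV. cnj (v i) * M i j * v j))"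

definition trace :: "('i::finite) op \<Rightarrow> complex" where
  "trace M = (\<Sum>i\<in>UNIV. M i i)"

definition density :: "('i::finite) op \<Rightarrow> bool" where
  "density M \<longleftrightarrow> psd M \<and> trace M = 1"

definition tensor_op :: "('a::finite) op \<Rightarrow> ('b::finite) op \<Rightarrow> ('a \<times> 'b) op" where
  "tensor_op M N = (\<lambda>(a, b) (a', b'). M a a' * N b b')"

definition separable :: "(('a::finite) \<times> ('b::finite)) op \<Rightarrow> bool" where
  "separable \<rho> \<longleftrightarrow> (\<exists>(n::nat) (p::nat \<Rightarrow> real) (\<rho>A::nat \<Rightarrow> 'a op) (\<rho>B::nat \<Rightarrow> 'b op).
      (\<forall>k<n. 0 \<le> p k \<and> density (\<rho>A k) \<and> density (\<rho>B k)) \<and>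
      (\<Sum>k<n. p k) = 1 \<and>
      \<rho> = (\<lambda>i j. \<Sum>k<n. complex_of_real (p k) * tensor_op (\<rho>A k) (\<rho>B k) i j))"

text \<open>Robustness of \<rho> relative to \<sigma>: least t \<ge> 0 such that
  1/(1+t) \<rho> + t/(1+t) \<sigma> is separable (infimum; +\<infinity> if there is none).\<close>
definition rel_robustness :: "(('a::finite) \<times> ('b::finite)) op \<Rightarrow> ('a \<times> 'b) op \<Rightarrow> ereal" where
  "rel_robustness \<rho> \<sigma> = Inf {ereal t | t. 0 \<le> t \<and>
      separable (\<lambda>i j. complex_of_real (1 / (1 + t)) * \<rho> i j
                       + complex_of_real (t / (1 + t)) * \<sigma> i j)}"

definition robustness :: "(('a::finite) \<times> ('b::finite)) op \<Rightarrow> ereal" where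
  "robustness \<rho> = Inf {rel_robustness \<rho> \<sigma> | \<sigma>. density \<sigma> \<and> separable \<sigma>}"

definition global_robustness :: "(('a::finite) \<times> ('b::finite)) op \<Rightarrow> ereal" where
  "global_robustness \<rho> = Inf {rel_robustness \<rho> \<sigma> | \<sigma>. density \<sigma>}"

definition proj :: "('i::finite \<Rightarrow> complex) \<Rightarrow> 'i op" where
  "proj \<psi> = (\<lambda>i j. \<psi> i * cnj (\<psi> j))"

definition orthonormal_family :: "nat \<Rightarrow> (nat \<Rightarrow> ('i::finite) \<Rightarrow> complex) \<Rightarrow> bool" where
  "orthonormal_family n e \<longleftrightarrow>
     (\<forall>j<n. \<forall>k<n. (\<Sum>i\<in>UNIV. cnj (e j i) * e k i) = (if j = k then 1 else 0))"

end

theory Submission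
  imports Defs "HOL-Library.FuncSet"
begin

text \<open>
  Write \<psi> = \<Sum>_j c_j e_j \<otimes> f_j, S = \<Sum>_j c_j (schmidt_sum below) and
  T = \<Sum>_(j \<noteq> k) c_j c_k = S^2 - 1 (cross_sum below).

  Lower bound: with \<Phi> = \<Sum>_j e_j \<otimes> f_j, the linear functional
  W(\<rho>) = \<Sum>_(j,k) \<langle>e_j f_k|\<rho>|e_j f_k\<rangle> - \<langle>\<Phi>|\<rho>|\<Phi>\<rangle>
  is nonnegative on product states (Cauchy-Schwarz and AM-GM), hence on separable states; it is at
  most 1 on every state (Bessel's inequality) and equals -T on \<psi>. So if (\<psi> + t \<sigma>)/(1 + t) is
  separable for some state \<sigma>, then 0 \<le> (t W(\<sigma>) - T)/(1 + t) \<le> (t - T)/(1 + t), i.e. t \<ge> T.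

  Upper bound: for phases \<phi> \<in> {1, \<i>, -1, -\<i>}^n put a_\<phi> = \<Sum>_j sqrt (c_j/S) \<phi>_j e_j and
  b_\<phi> = \<Sum>_j sqrt (c_j/S) cnj \<phi>_j f_j. Averaging the product states a_\<phi> \<otimes> b_\<phi> over
  all \<phi> kills every phase monomial except those of the coherent terms of \<psi> and of the incoherent
  product terms D = \<Sum>_(j \<noteq> k) c_j c_k |e_j f_k\<rangle>\<langle>e_j f_k|, so
  (|\<psi>\<rangle>\<langle>\<psi>| + D)/S^2 is separable. If T > 0, this state is (|\<psi>\<rangle>\<langle>\<psi>| + T \<sigma>)/(1 + T)
  for the separable state \<sigma> = D/T, so R(\<psi>) \<le> T; if T = 0, \<psi> is a product state. Since
  R_g \<le> R always, both robustnesses equal T.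
\<close>

section \<open>Matrix elements\<close>

definition braket :: "('i::finite \<Rightarrow> complex) \<Rightarrow> ('i \<Rightarrow> complex) \<Rightarrow> complex" where
  "braket v w = (\<Sum>x\<in>UNIV. cnj (v x) * w x)"

definition matrix_element :: "('i::finite) op \<Rightarrow> ('i \<Rightarrow> complex) \<Rightarrow> ('i \<Rightarrow> complex) \<Rightarrow> complex" where
  "matrix_element M v w = (\<Sum>x\<in>UNIV. \<Sum>y\<in>UNIV. cnj (v x) * M x y * w y)"

lemma psd_iff_matrix_element:
  "psd M \<longleftrightarrow> hermitian M \<and> (\<forall>v. 0 \<le> Re (matrix_element M v v))"
  by (simp add: psd_def matrix_element_def)

lemma psd_matrix_element_nonneg: "psd M \<Longrightarrow> 0 \<le> Re (matrix_element M v v)"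
  by (simp add: psd_iff_matrix_element)

lemma braket_swap: "braket w v = cnj (braket v w)"
  unfolding braket_def by (simp add: mult.commute)

lemma braket_self: "braket v v = complex_of_real (\<Sum>x\<in>UNIV. (cmod (v x))\<^sup>2)"
  unfolding braket_def of_real_sum complex_norm_square by (simp add: mult.commute)

lemma braket_sum_right: "braket v (\<lambda>x. \<Sum>i\<in>I. a i * w i x) = (\<Sum>i\<in>I. a i * braket v (w i))"
  unfolding braket_def by (simp add: sum_distrib_left mult.left_commute) (rule sum.swap)

lemma orthonormal_family_braket:
  "orthonormal_family n e \<Longrightarrow> j < n \<Longrightarrow> k < n \<Longrightarrow> braket (e j) (e k) = (if j = k then 1 else 0)"
  by (simp add: orthonormal_family_def braket_def)

lemma braket_orthonormal_combination:
  assumes "orthonormal_family n e"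
  shows "braket (\<lambda>x. \<Sum>j<n. a j * e j x) (\<lambda>x. \<Sum>j<n. b j * e j x) = (\<Sum>j<n. cnj (a j) * b j)"
proof -
  have "braket (e k) (\<lambda>x. \<Sum>j<n. a j * e j x) = a k" if "k < n" for k
  proof -
    have "braket (e k) (\<lambda>x. \<Sum>j<n. a j * e j x) = (\<Sum>j<n. if k = j then a j else 0)"
      unfolding braket_sum_right using assms that by (intro sum.cong refl) (simp add: orthonormal_family_braket)
    with that show ?thesis by simp
  qed
  then have "braket (\<lambda>x. \<Sum>j<n. a j * e j x) (e k) = cnj (a k)" if "k < n" for k
    using that by (subst braket_swap) simp
  then show ?thesis
    unfolding braket_sum_right by (intro sum.cong refl) (simp add: mult.commute)
qed

lemma hermitian_matrix_element_swap:
  assumes "hermitian M"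
  shows "matrix_element M w v = cnj (matrix_element M v w)"
proof -
  have "cnj (matrix_element M v w) = (\<Sum>x\<in>UNIV. \<Sum>y\<in>UNIV. cnj (w y) * M y x * v x)"
    using assms unfolding matrix_element_def hermitian_def cnj_sum
    by (intro sum.cong refl) (metis complex_cnj_cnj complex_cnj_mult mult.commute mult.left_commute)
  also have "\<dots> = matrix_element M w v"
    unfolding matrix_element_def by (rule sum.swap)
  finally show ?thesis by simp
qed

lemma hermitian_matrix_element_real: "hermitian M \<Longrightarrow> matrix_element M v v = Re (matrix_element M v v)"
  using hermitian_matrix_element_swap[of M v v] by (simp add: complex_eq_iff)

lemma matrix_element_sum_left_right:
  "matrix_element M (\<lambda>x. \<Sum>i\<in>I. v i x) (\<lambda>x. \<Sum>j\<in>J. w j x) = (\<Sum>i\<in>I. \<Sum>j\<in>J. matrix_element M (v i) (w j))"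
  unfolding matrix_element_def cnj_sum sum_distrib_left sum_distrib_right
  by (subst sum.swap, subst (2) sum.swap, subst (3) sum.swap) (simp add: sum.swap[where A = J])

lemma matrix_element_mixture:
  "matrix_element (\<lambda>x y. \<Sum>k\<in>K. a k * M k x y) v w = (\<Sum>k\<in>K. a k * matrix_element (M k) v w)"
  unfolding matrix_element_def sum_distrib_left sum_distrib_right
  by (subst sum.swap, subst (2) sum.swap) (simp add: mult_ac)

lemma matrix_element_combination:
  "matrix_element (\<lambda>x y. a * M x y + b * N x y) v w = a * matrix_element M v w + b * matrix_element N v w"
  unfolding matrix_element_def by (simp add: algebra_simps sum.distrib sum_distrib_left)

lemma matrix_element_expand:
  "matrix_element M (\<lambda>x. z * v x + w x) (\<lambda>x. z * v x + w x) =
     cnj z * z * matrix_element M v v + cnj z * matrix_element M v w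
     + z * matrix_element M w v + matrix_element M w w"
  unfolding matrix_element_def by (simp add: algebra_simps sum.distrib sum_distrib_left)

lemma nonneg_quadratic_imp_le:
  fixes B p q :: real
  assumes "0 \<le> p" and nonneg: "\<And>s. 0 \<le> s\<^sup>2 * B * p - 2 * s * B + q"
  shows "B \<le> p * q"
proof (cases "p = 0")
  case True
  show ?thesis
  proof (rule ccontr)
    assume "\<not> B \<le> p * q"
    with True have "0 < B" by simp
    have "0 \<le> ((q + 1) / (2 * B))\<^sup>2 * B * p - 2 * ((q + 1) / (2 * B)) * B + q" by (rule nonneg)
    with True \<open>0 < B\<close> show False by simp
  qed
next
  case False
  have "0 \<le> (1/p)\<^sup>2 * B * p - 2 * (1/p) * B + q" by (rule nonneg)
  with False \<open>0 \<le> p\<close> show ?thesis by (simp add: field_simps power2_eq_square)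
qed

lemma psd_cauchy_schwarz:
  assumes "psd M"
  shows "(cmod (matrix_element M v w))\<^sup>2 \<le> Re (matrix_element M v v) * Re (matrix_element M w w)"
proof (rule nonneg_quadratic_imp_le)
  define b where "b = matrix_element M v w"
  have vv: "matrix_element M v v = Re (matrix_element M v v)"
    and ww: "matrix_element M w w = Re (matrix_element M w w)"
    and wv: "matrix_element M w v = cnj b"
    using assms hermitian_matrix_element_real hermitian_matrix_element_swap
    unfolding psd_iff_matrix_element b_def by blast+
  fix s :: real
  let ?z = "- of_real s * b"
  have "0 \<le> Re (matrix_element M (\<lambda>x. ?z * v x + w x) (\<lambda>x. ?z * v x + w x))"
    using assms by (rule psd_matrix_element_nonneg)
  also have "\<dots> = Re (cnj ?z * ?z * matrix_element M v v + cnj ?z * matrix_element M v w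
      + ?z * matrix_element M w v + matrix_element M w w)"
    by (simp only: matrix_element_expand)
  also have "\<dots> = s\<^sup>2 * (cmod b)\<^sup>2 * Re (matrix_element M v v) - 2 * s * (cmod b)\<^sup>2 + Re (matrix_element M w w)"
    unfolding wv b_def[symmetric] cmod_power2 by (subst vv, subst ww) (simp add: power2_eq_square algebra_simps)
  finally show "0 \<le> s\<^sup>2 * (cmod (matrix_element M v w))\<^sup>2 * Re (matrix_element M v v)
      - 2 * s * (cmod (matrix_element M v w))\<^sup>2 + Re (matrix_element M w w)"
    by (simp add: b_def)
qed (rule psd_matrix_element_nonneg[OF assms])

lemma sum_matrix_element_projection_columns:
  assumes herm: "hermitian Q" and idem: "\<And>x y. (\<Sum>z\<in>UNIV. Q x z * Q z y) = Q x y"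
  shows "(\<Sum>z\<in>UNIV. matrix_element \<sigma> (\<lambda>x. Q x z) (\<lambda>x. Q x z)) = (\<Sum>x\<in>UNIV. \<Sum>y\<in>UNIV. \<sigma> x y * Q y x)"
proof -
  have "(\<Sum>z\<in>UNIV. matrix_element \<sigma> (\<lambda>x. Q x z) (\<lambda>x. Q x z))
      = (\<Sum>z\<in>UNIV. \<Sum>x\<in>UNIV. \<Sum>y\<in>UNIV. \<sigma> x y * (Q y z * Q z x))"
    using herm unfolding matrix_element_def hermitian_def
    by (intro sum.cong refl) (metis mult.commute mult.left_commute)
  also have "\<dots> = (\<Sum>x\<in>UNIV. \<Sum>y\<in>UNIV. \<Sum>z\<in>UNIV. \<sigma> x y * (Q y z * Q z x))"
    by (subst sum.swap, rule sum.cong[OF refl], rule sum.swap)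
  also have "\<dots> = (\<Sum>x\<in>UNIV. \<Sum>y\<in>UNIV. \<sigma> x y * (\<Sum>z\<in>UNIV. Q y z * Q z x))"
    by (simp add: sum_distrib_left)
  finally show ?thesis
    by (simp only: idem)
qed

text \<open>Bessel's inequality: for the orthogonal projection Q = 1 - \<Sum>_i |g_i\<rangle>\<langle>g_i|, the
  nonnegative sum of the matrix elements of \<sigma> at the columns of Q is tr \<sigma> - \<Sum>_i \<langle>g_i|\<sigma>|g_i\<rangle>.\<close>

lemma psd_sum_matrix_element_le_trace:
  fixes g :: "'k \<Rightarrow> 'i::finite \<Rightarrow> complex"
  assumes "finite I" and orthonormal: "\<And>i i'. i \<in> I \<Longrightarrow> i' \<in> I \<Longrightarrow> braket (g i) (g i') = (if i = i' then 1 else 0)"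
    and "psd \<sigma>"
  shows "Re (\<Sum>i\<in>I. matrix_element \<sigma> (g i) (g i)) \<le> Re (trace \<sigma>)"
proof -
  define P where "P x y = (\<Sum>i\<in>I. g i x * cnj (g i y))" for x y
  define Q where "Q x y = (if x = y then 1 else 0) - P x y" for x y
  have P_idem: "(\<Sum>z\<in>UNIV. P x z * P z y) = P x y" for x y
  proof -
    have "(\<Sum>z\<in>UNIV. P x z * P z y) = (\<Sum>z\<in>UNIV. \<Sum>i\<in>I. \<Sum>i'\<in>I. g i x * cnj (g i' y) * (cnj (g i z) * g i' z))"
      unfolding P_def sum_product by (simp add: mult_ac)
    also have "\<dots> = (\<Sum>i\<in>I. \<Sum>i'\<in>I. \<Sum>z\<in>UNIV. g i x * cnj (g i' y) * (cnj (g i z) * g i' z))"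
      by (subst sum.swap, rule sum.cong[OF refl], rule sum.swap)
    also have "\<dots> = (\<Sum>i\<in>I. \<Sum>i'\<in>I. if i = i' then g i x * cnj (g i' y) else 0)"
      unfolding sum_distrib_left[symmetric] braket_def[symmetric] by (intro sum.cong refl) (simp add: orthonormal)
    also have "\<dots> = P x y"
      unfolding P_def using \<open>finite I\<close> by simp
    finally show ?thesis .
  qed
  have "hermitian Q"
    by (simp add: hermitian_def Q_def P_def cnj_sum mult.commute)
  moreover have "(\<Sum>z\<in>UNIV. Q x z * Q z y) = Q x y" for x y
  proof -
    have "Q x z * Q z y = (if x = z then Q z y else 0) - (if z = y then P x z else 0) + P x z * P z y" for z
      unfolding Q_def by (simp add: algebra_simps)
    then show ?thesis
      by (simp add: sum.distrib sum_subtractf P_idem Q_def)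
  qed
  ultimately have "(\<Sum>z\<in>UNIV. matrix_element \<sigma> (\<lambda>x. Q x z) (\<lambda>x. Q x z)) = (\<Sum>x\<in>UNIV. \<Sum>y\<in>UNIV. \<sigma> x y * Q y x)"
    by (rule sum_matrix_element_projection_columns)
  also have "\<dots> = trace \<sigma> - (\<Sum>x\<in>UNIV. \<Sum>y\<in>UNIV. \<sigma> x y * P y x)"
    unfolding Q_def trace_def
    by (simp add: right_diff_distrib sum_subtractf if_distrib[of "\<lambda>z. _ * z"] cong: if_cong)
  also have "(\<Sum>x\<in>UNIV. \<Sum>y\<in>UNIV. \<sigma> x y * P y x) = (\<Sum>i\<in>I. matrix_element \<sigma> (g i) (g i))"
    unfolding P_def matrix_element_def sum_distrib_left
    by (subst sum.swap, subst (2) sum.swap) (simp add: sum.swap[where B = I] mult_ac)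
  finally have "(\<Sum>z\<in>UNIV. Re (matrix_element \<sigma> (\<lambda>x. Q x z) (\<lambda>x. Q x z)))
      = Re (trace \<sigma>) - Re (\<Sum>i\<in>I. matrix_element \<sigma> (g i) (g i))"
    by (metis Re_sum minus_complex.sel)
  moreover have "0 \<le> (\<Sum>z\<in>UNIV. Re (matrix_element \<sigma> (\<lambda>x. Q x z) (\<lambda>x. Q x z)))"
    using \<open>psd \<sigma>\<close> by (intro sum_nonneg psd_matrix_element_nonneg)
  ultimately show ?thesis by simp
qed

section \<open>Pure, product and separable states\<close>

definition tensor_ket :: "('a::finite \<Rightarrow> complex) \<Rightarrow> ('b::finite \<Rightarrow> complex) \<Rightarrow> 'a \<times> 'b \<Rightarrow> complex" where
  "tensor_ket v w = (\<lambda>(a, b). v a * w b)"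

lemma tensor_ket_apply [simp]: "tensor_ket v w (a, b) = v a * w b"
  by (simp add: tensor_ket_def)

lemma sum_UNIV_pair:
  "(\<Sum>x\<in>UNIV. g x) = (\<Sum>a\<in>UNIV. \<Sum>b\<in>UNIV. g (a, b))"
  by (simp add: sum.cartesian_product)

lemma braket_tensor_ket:
  "braket (tensor_ket v w) (tensor_ket v' w') = braket v v' * braket w w'"
  unfolding braket_def sum_UNIV_pair sum_product by (simp add: mult_ac)

lemma matrix_element_tensor_op:
  "matrix_element (tensor_op X Y) (tensor_ket v w) (tensor_ket v' w') =
     matrix_element X v v' * matrix_element Y w w'"
proof -
  have "matrix_element (tensor_op X Y) (tensor_ket v w) (tensor_ket v' w') =
     (\<Sum>a\<in>UNIV. \<Sum>b\<in>UNIV. \<Sum>a'\<in>UNIV. \<Sum>b'\<in>UNIV.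
        (cnj (v a) * X a a' * v' a') * (cnj (w b) * Y b b' * w' b'))"
    unfolding matrix_element_def sum_UNIV_pair by (simp add: tensor_op_def mult_ac)
  also have "\<dots> = matrix_element X v v' * matrix_element Y w w'"
    unfolding matrix_element_def sum_product by (intro sum.cong refl)
  finally show ?thesis .
qed

lemma tensor_op_proj: "tensor_op (proj v) (proj w) = proj (tensor_ket v w)"
  by (auto simp: fun_eq_iff tensor_op_def proj_def)

lemma matrix_element_proj: "matrix_element (proj v) w w' = braket w v * braket v w'"
  unfolding matrix_element_def braket_def proj_def sum_product by (simp add: mult_ac)

lemma proj_double_sum:
  "proj (\<lambda>x. \<Sum>j\<in>J. \<Sum>k\<in>K. a j k * v j k x) y z =
    (\<Sum>j\<in>J. \<Sum>k\<in>K. \<Sum>j'\<in>J. \<Sum>k'\<in>K. a j k * cnj (a j' k') * (v j k y * cnj (v j' k' z)))"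
  unfolding proj_def cnj_sum sum_distrib_right
  unfolding sum_distrib_left by (simp add: mult_ac)

lemma density_proj:
  assumes "braket v v = 1"
  shows "density (proj v)"
proof -
  have "hermitian (proj v)"
    by (simp add: hermitian_def proj_def mult.commute)
  moreover have "0 \<le> Re (matrix_element (proj v) w w)" for w
    by (simp add: matrix_element_proj braket_swap[of w v])
  moreover have "trace (proj v) = 1"
    using assms unfolding trace_def proj_def braket_def by (simp add: mult.commute)
  ultimately show ?thesis
    unfolding density_def psd_iff_matrix_element by blast
qed

lemma density_mixture:
  assumes "finite I" and "\<forall>i\<in>I. 0 \<le> p i \<and> density (M i)" and "(\<Sum>i\<in>I. p i) = 1"
  shows "density (\<lambda>x y. \<Sum>i\<in>I. complex_of_real (p i) * M i x y)"
proof -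
  have "complex_of_real (p i) * M i x y = cnj (complex_of_real (p i) * M i y x)" if "i \<in> I" for i x y
    using assms(2) that unfolding density_def psd_def hermitian_def by (metis complex_cnj_complex_of_real complex_cnj_mult)
  then have "hermitian (\<lambda>x y. \<Sum>i\<in>I. complex_of_real (p i) * M i x y)"
    unfolding hermitian_def cnj_sum by (blast intro: sum.cong)
  moreover have "0 \<le> Re (matrix_element (\<lambda>x y. \<Sum>i\<in>I. complex_of_real (p i) * M i x y) v v)" for v
    using assms(2) unfolding matrix_element_mixture
    by (auto simp: density_def intro!: sum_nonneg mult_nonneg_nonneg psd_matrix_element_nonneg)
  moreover have "trace (\<lambda>x y. \<Sum>i\<in>I. complex_of_real (p i) * M i x y) = 1"
  proof -
    have "trace (\<lambda>x y. \<Sum>i\<in>I. complex_of_real (p i) * M i x y) = (\<Sum>i\<in>I. complex_of_real (p i) * trace (M i))"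
      unfolding trace_def sum_distrib_left by (rule sum.swap)
    also have "\<dots> = 1"
      using assms(2,3) by (simp add: density_def flip: of_real_sum)
    finally show ?thesis .
  qed
  ultimately show ?thesis
    unfolding density_def psd_iff_matrix_element by blast
qed

lemma separable_mixture:
  fixes A :: "'k \<Rightarrow> ('a::finite) op" and B :: "'k \<Rightarrow> ('b::finite) op"
  assumes "finite I" and "\<forall>i\<in>I. 0 \<le> p i \<and> density (A i) \<and> density (B i)" and "(\<Sum>i\<in>I. p i) = 1"
  shows "separable (\<lambda>x y. \<Sum>i\<in>I. complex_of_real (p i) * tensor_op (A i) (B i) x y)"
proof -
  obtain g where g: "bij_betw g {..<card I} I"
    using ex_bij_betw_nat_finite[OF assms(1)] by (auto simp: atLeast0LessThan)
  then have "g k \<in> I" if "k < card I" for k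
    using that by (auto simp: bij_betw_def)
  with assms(2,3) show ?thesis
    unfolding separable_def
  proof (intro exI conjI)
    show "(\<Sum>k<card I. (p \<circ> g) k) = 1"
      using sum.reindex_bij_betw[OF g, of p] assms(3) by simp
    show "(\<lambda>x y. \<Sum>i\<in>I. complex_of_real (p i) * tensor_op (A i) (B i) x y) =
      (\<lambda>x y. \<Sum>k<card I. complex_of_real ((p \<circ> g) k) * tensor_op ((A \<circ> g) k) ((B \<circ> g) k) x y)"
      using sum.reindex_bij_betw[OF g, of "\<lambda>i. complex_of_real (p i) * tensor_op (A i) (B i) _ _"]
      by (simp add: fun_eq_iff)
  qed auto
qed

section \<open>An entanglement witness adapted to a Schmidt basis\<close>

lemma mult_le_cross_mean:
  fixes x y a a' b b' :: real
  assumes "0 \<le> x" "0 \<le> y" "0 \<le> a" "0 \<le> a'" "0 \<le> b" "0 \<le> b'"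
    and "x\<^sup>2 \<le> a * a'" and "y\<^sup>2 \<le> b * b'"
  shows "x * y \<le> (a * b' + a' * b) / 2"
proof (rule power2_le_imp_le)
  have "(x * y)\<^sup>2 = x\<^sup>2 * y\<^sup>2"
    by (simp add: power_mult_distrib)
  also have "\<dots> \<le> (a * a') * (b * b')"
    using assms by (intro mult_mono) auto
  also have "\<dots> = (a * b') * (a' * b)"
    by (simp add: mult_ac)
  also have "\<dots> \<le> ((a * b' + a' * b) / 2)\<^sup>2"
    using sum_squares_ge_zero[of "a * b' - a' * b" 0] by (simp add: power2_eq_square field_simps)
  finally show "(x * y)\<^sup>2 \<le> ((a * b' + a' * b) / 2)\<^sup>2" .
qed (use assms in simp)

text \<open>schmidt_witness e f n M = tr (W M) for the witness
  W = \<Sum>_(j,k) |e_j f_k\<rangle>\<langle>e_j f_k| - |\<Phi>\<rangle>\<langle>\<Phi>|, where \<Phi> = \<Sum>_j e_j \<otimes> f_j.\<close>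

definition schmidt_witness ::
    "(nat \<Rightarrow> 'a::finite \<Rightarrow> complex) \<Rightarrow> (nat \<Rightarrow> 'b::finite \<Rightarrow> complex) \<Rightarrow> nat \<Rightarrow> ('a \<times> 'b) op \<Rightarrow> complex"
  where "schmidt_witness e f n M = (\<Sum>j<n. \<Sum>k<n.
     matrix_element M (tensor_ket (e j) (f k)) (tensor_ket (e j) (f k))
     - matrix_element M (tensor_ket (e k) (f k)) (tensor_ket (e j) (f j)))"

lemma schmidt_witness_tensor_op_nonneg:
  assumes X: "psd X" and Y: "psd Y"
  shows "0 \<le> Re (schmidt_witness e f n (tensor_op X Y))"
proof -
  define a where "a j = Re (matrix_element X (e j) (e j))" for j
  define b where "b j = Re (matrix_element Y (f j) (f j))" for j
  have a_nonneg: "0 \<le> a j" and b_nonneg: "0 \<le> b j" for j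
    unfolding a_def b_def using X Y by (simp_all add: psd_matrix_element_nonneg)
  have cross: "Re (matrix_element X (e k) (e j) * matrix_element Y (f k) (f j)) \<le> (a j * b k + a k * b j) / 2"
    for j k
  proof -
    have "Re (matrix_element X (e k) (e j) * matrix_element Y (f k) (f j))
        \<le> cmod (matrix_element X (e k) (e j)) * cmod (matrix_element Y (f k) (f j))"
      using complex_Re_le_cmod by (metis norm_mult)
    also have "\<dots> \<le> (a j * b k + a k * b j) / 2"
      using psd_cauchy_schwarz[OF X, of "e k" "e j"] psd_cauchy_schwarz[OF Y, of "f k" "f j"]
        a_nonneg b_nonneg unfolding a_def b_def
      by (intro mult_le_cross_mean) (auto simp: mult.commute)
    finally show ?thesis .
  qed
  have "matrix_element X (e j) (e j) = a j" "matrix_element Y (f j) (f j) = b j" for j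
    using X Y unfolding a_def b_def psd_def by (simp_all flip: hermitian_matrix_element_real)
  then have "Re (schmidt_witness e f n (tensor_op X Y)) =
      (\<Sum>j<n. \<Sum>k<n. a j * b k - Re (matrix_element X (e k) (e j) * matrix_element Y (f k) (f j)))"
    unfolding schmidt_witness_def matrix_element_tensor_op by simp
  also have "\<dots> \<ge> (\<Sum>j<n. \<Sum>k<n. a j * b k - (a j * b k + a k * b j) / 2)"
    by (intro sum_mono diff_left_mono cross)
  also have "(\<Sum>j<n. \<Sum>k<n. a j * b k - (a j * b k + a k * b j) / 2)
      = ((\<Sum>j<n. \<Sum>k<n. a j * b k) - (\<Sum>j<n. \<Sum>k<n. a k * b j)) / 2"
    by (simp add: sum_subtractf sum_divide_distrib diff_divide_distrib add_divide_distrib)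
  also have "\<dots> = 0"
    by (subst sum.swap) simp
  finally show ?thesis .
qed

lemma schmidt_witness_mixture:
  "schmidt_witness e f n (\<lambda>x y. \<Sum>i\<in>I. a i * M i x y) = (\<Sum>i\<in>I. a i * schmidt_witness e f n (M i))"
  unfolding schmidt_witness_def matrix_element_mixture
  by (simp add: sum_subtractf right_diff_distrib sum_distrib_left sum.swap[where B = I])

lemma schmidt_witness_combination:
  "schmidt_witness e f n (\<lambda>x y. a * M x y + b * N x y) = a * schmidt_witness e f n M + b * schmidt_witness e f n N"
  unfolding schmidt_witness_def matrix_element_combination
  by (simp add: algebra_simps sum.distrib sum_distrib_left sum_subtractf)

lemma schmidt_witness_separable_nonneg:
  assumes "separable \<rho>"
  shows "0 \<le> Re (schmidt_witness e f n \<rho>)"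
proof -
  obtain N :: nat and p \<rho>A \<rho>B where states: "\<forall>k<N. 0 \<le> p k \<and> density (\<rho>A k) \<and> density (\<rho>B k)"
    and \<rho>: "\<rho> = (\<lambda>i j. \<Sum>k<N. complex_of_real (p k) * tensor_op (\<rho>A k) (\<rho>B k) i j)"
    using assms unfolding separable_def by blast
  have "Re (schmidt_witness e f n \<rho>) = (\<Sum>k<N. p k * Re (schmidt_witness e f n (tensor_op (\<rho>A k) (\<rho>B k))))"
    unfolding \<rho> schmidt_witness_mixture by simp
  also have "\<dots> \<ge> 0"
    using states by (intro sum_nonneg mult_nonneg_nonneg schmidt_witness_tensor_op_nonneg) (auto simp: density_def)
  finally show ?thesis .
qed

abbreviation robustness_mixture :: "real \<Rightarrow> ('i::finite) op \<Rightarrow> 'i op \<Rightarrow> 'i op" where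
  "robustness_mixture t \<rho> \<sigma> \<equiv> (\<lambda>i j. complex_of_real (1 / (1 + t)) * \<rho> i j + complex_of_real (t / (1 + t)) * \<sigma> i j)"

lemma rel_robustness_le:
  "0 \<le> t \<Longrightarrow> separable (robustness_mixture t \<rho> \<sigma>) \<Longrightarrow> rel_robustness \<rho> \<sigma> \<le> ereal t"
  unfolding rel_robustness_def by (rule Inf_lower) blast

lemma rel_robustness_ge:
  "(\<And>t. 0 \<le> t \<Longrightarrow> separable (robustness_mixture t \<rho> \<sigma>) \<Longrightarrow> r \<le> t) \<Longrightarrow> ereal r \<le> rel_robustness \<rho> \<sigma>"
  unfolding rel_robustness_def by (rule Inf_greatest) auto

lemma global_robustness_le_robustness: "global_robustness \<rho> \<le> robustness \<rho>"
  unfolding global_robustness_def robustness_def by (rule Inf_superset_mono) blast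

section \<open>Averaging over quarter-turn phases\<close>

definition quarter_phases :: "complex set" where
  "quarter_phases = {1, \<i>, -1, -\<i>}"

lemma finite_quarter_phases [simp]: "finite quarter_phases"
  by (simp add: quarter_phases_def)

lemma card_quarter_phases: "card quarter_phases = 4"
  by (simp add: quarter_phases_def complex_eq_iff)

lemma quarter_phase_cnj_mult: "z \<in> quarter_phases \<Longrightarrow> cnj z * z = 1"
  by (auto simp: quarter_phases_def)

lemma quarter_phases_mult_imag:
  "z \<in> quarter_phases \<Longrightarrow> \<i> * z \<in> quarter_phases" "z \<in> quarter_phases \<Longrightarrow> - (\<i> * z) \<in> quarter_phases"
  by (auto simp: quarter_phases_def)

lemma card_quarter_phase_vectors: "card ({..<n} \<rightarrow>\<^sub>E quarter_phases) = 4 ^ n"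
  by (simp add: card_PiE card_quarter_phases)

lemma sum_quarter_phase_monomial_vanishes:
  assumes "j < n" "k < n" "j' < n" "k' < n" and "\<not> ((j = k \<and> j' = k') \<or> (j = j' \<and> k = k'))"
  shows "(\<Sum>\<phi>\<in>{..<n} \<rightarrow>\<^sub>E quarter_phases. \<phi> j * cnj (\<phi> k) * cnj (\<phi> j') * \<phi> k') = 0"
proof -
  let ?\<Phi> = "{..<n} \<rightarrow>\<^sub>E quarter_phases"
  let ?m = "\<lambda>\<phi>. \<phi> j * cnj (\<phi> k) * cnj (\<phi> j') * \<phi> k'"
  define factor where
    "factor l = (if l = j then \<i> else 1) * (if l = k then - \<i> else 1) * (if l = j' then - \<i> else 1) * (if l = k' then \<i> else 1)"
    for l
  have "\<exists>l\<in>{j, k, j', k'}. factor l \<noteq> 1"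
    using assms(5) unfolding factor_def
    by (cases "j = k"; cases "j = j'"; cases "j = k'"; cases "k = j'"; cases "k = k'"; cases "j' = k'")
      (auto simp: complex_eq_iff)
  then obtain l where l: "l < n" "factor l \<noteq> 1"
    using assms(1-4) by blast
  \<comment> \<open>rotating the phase at position l by \<i> permutes the phase vectors\<close>
  have rotate: "?m (\<phi>(l := \<i> * \<phi> l)) = factor l * ?m \<phi>" for \<phi>
    unfolding factor_def by (auto simp: algebra_simps)
  have "(\<Sum>\<phi>\<in>?\<Phi>. ?m (\<phi>(l := \<i> * \<phi> l))) = (\<Sum>\<phi>\<in>?\<Phi>. ?m \<phi>)"
  proof (rule sum.reindex_bij_witness[where i = "\<lambda>\<phi>. \<phi>(l := - \<i> * \<phi> l)" and j = "\<lambda>\<phi>. \<phi>(l := \<i> * \<phi> l)"])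
    fix \<phi> assume "\<phi> \<in> ?\<Phi>"
    then show "\<phi>(l := \<i> * \<phi> l) \<in> ?\<Phi>" "\<phi>(l := - \<i> * \<phi> l) \<in> ?\<Phi>"
      using l(1) by (auto simp: PiE_iff extensional_def intro: quarter_phases_mult_imag)
  qed (simp_all add: fun_eq_iff)
  then have "factor l * (\<Sum>\<phi>\<in>?\<Phi>. ?m \<phi>) = (\<Sum>\<phi>\<in>?\<Phi>. ?m \<phi>)"
    by (simp only: rotate sum_distrib_left)
  then have "(factor l - 1) * (\<Sum>\<phi>\<in>?\<Phi>. ?m \<phi>) = 0"
    by (simp add: algebra_simps)
  with l(2) show ?thesis by simp
qed

lemma sum_quarter_phase_monomial:
  assumes "j < n" "k < n" "j' < n" "k' < n"
  shows "(\<Sum>\<phi>\<in>{..<n} \<rightarrow>\<^sub>E quarter_phases. \<phi> j * cnj (\<phi> k) * cnj (\<phi> j') * \<phi> k') =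
    (if (j = k \<and> j' = k') \<or> (j = j' \<and> k = k') then 4 ^ n else 0)"
proof (cases "(j = k \<and> j' = k') \<or> (j = j' \<and> k = k')")
  case True
  have "\<phi> j * cnj (\<phi> k) * cnj (\<phi> j') * \<phi> k' = 1" if "\<phi> \<in> {..<n} \<rightarrow>\<^sub>E quarter_phases" for \<phi>
  proof -
    have unit: "\<phi> l * cnj (\<phi> l) = 1" "cnj (\<phi> l) * \<phi> l = 1" if "l < n" for l
      using \<open>\<phi> \<in> _\<close> that quarter_phase_cnj_mult[of "\<phi> l"] by (auto simp: mult.commute)
    from True show ?thesis
    proof
      assume "j = j' \<and> k = k'"
      then have "\<phi> j * cnj (\<phi> k) * cnj (\<phi> j') * \<phi> k' = (\<phi> j * cnj (\<phi> j)) * (cnj (\<phi> k) * \<phi> k)"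
        by (simp add: mult_ac)
      with assms show ?thesis by (simp add: unit)
    qed (use assms unit in simp)
  qed
  with True show ?thesis
    by (simp add: card_quarter_phase_vectors)
qed (use sum_quarter_phase_monomial_vanishes[OF assms] in simp)

lemma sum_pairing_collapse:
  fixes F :: "nat \<Rightarrow> nat \<Rightarrow> nat \<Rightarrow> nat \<Rightarrow> 'a::comm_ring"
  shows "(\<Sum>j<n. \<Sum>k<n. \<Sum>j'<n. \<Sum>k'<n. if (j = k \<and> j' = k') \<or> (j = j' \<and> k = k') then F j k j' k' else 0)
    = (\<Sum>j<n. \<Sum>j'<n. F j j j' j') + (\<Sum>j<n. \<Sum>k<n. F j k j k) - (\<Sum>j<n. F j j j j)"
proof -
  have "(if (j = k \<and> j' = k') \<or> (j = j' \<and> k = k') then F j k j' k' else 0)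
     = (if k' = j' then (if k = j then F j j j' j' else 0) else 0)
     + (if k' = k then (if j' = j then F j k j k else 0) else 0)
     - (if k' = j then (if j' = j then (if k = j then F j j j j else 0) else 0) else 0)" for j k j' k'
    by auto
  moreover have "(\<Sum>x\<in>A. if P then g x else 0) = (if P then sum g A else 0)" for P A and g :: "nat \<Rightarrow> 'a"
    by simp
  ultimately show ?thesis
    by (simp add: sum.distrib sum_subtractf)
qed

lemma quarter_phase_average:
  fixes F :: "nat \<Rightarrow> nat \<Rightarrow> nat \<Rightarrow> nat \<Rightarrow> complex"
  shows "(\<Sum>\<phi>\<in>{..<n} \<rightarrow>\<^sub>E quarter_phases. \<Sum>j<n. \<Sum>k<n. \<Sum>j'<n. \<Sum>k'<n.
      F j k j' k' * (\<phi> j * cnj (\<phi> k) * cnj (\<phi> j') * \<phi> k'))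
    = 4 ^ n * ((\<Sum>j<n. \<Sum>j'<n. F j j j' j') + (\<Sum>j<n. \<Sum>k<n. F j k j k) - (\<Sum>j<n. F j j j j))"
proof -
  have "(\<Sum>\<phi>\<in>{..<n} \<rightarrow>\<^sub>E quarter_phases. \<Sum>j<n. \<Sum>k<n. \<Sum>j'<n. \<Sum>k'<n.
      F j k j' k' * (\<phi> j * cnj (\<phi> k) * cnj (\<phi> j') * \<phi> k'))
    = (\<Sum>j<n. \<Sum>k<n. \<Sum>j'<n. \<Sum>k'<n.
      F j k j' k' * (\<Sum>\<phi>\<in>{..<n} \<rightarrow>\<^sub>E quarter_phases. \<phi> j * cnj (\<phi> k) * cnj (\<phi> j') * \<phi> k'))"
    by (simp add: sum_distrib_left sum.swap[where A = "{..<n} \<rightarrow>\<^sub>E quarter_phases"])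
  also have "\<dots> = (\<Sum>j<n. \<Sum>k<n. \<Sum>j'<n. \<Sum>k'<n.
      4 ^ n * (if (j = k \<and> j' = k') \<or> (j = j' \<and> k = k') then F j k j' k' else 0))"
    by (intro sum.cong refl) (simp add: sum_quarter_phase_monomial)
  finally show ?thesis
    by (simp add: sum_distrib_left[symmetric] sum_pairing_collapse)
qed

section \<open>States in Schmidt form\<close>

locale schmidt_decomposition =
  fixes e :: "nat \<Rightarrow> 'a::finite \<Rightarrow> complex" and f :: "nat \<Rightarrow> 'b::finite \<Rightarrow> complex"
    and n :: nat and c :: "nat \<Rightarrow> real"
  assumes orthonormal_e: "orthonormal_family n e" and orthonormal_f: "orthonormal_family n f"
    and c_nonneg: "\<And>j. j < n \<Longrightarrow> 0 \<le> c j"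
begin

definition schmidt_state :: "'a \<times> 'b \<Rightarrow> complex" where
  "schmidt_state = (\<lambda>x. \<Sum>j<n. complex_of_real (c j) * tensor_ket (e j) (f j) x)"

definition cross_sum :: real where
  "cross_sum = (\<Sum>j<n. \<Sum>k<n. if j = k then 0 else c j * c k)"

lemma cross_sum_nonneg: "0 \<le> cross_sum"
  unfolding cross_sum_def using c_nonneg by (auto intro!: sum_nonneg)

lemma braket_product_basis:
  assumes "j < n" "k < n" "j' < n" "k' < n"
  shows "braket (tensor_ket (e j) (f k)) (tensor_ket (e j') (f k')) = (if j = j' \<and> k = k' then 1 else 0)"
  using assms orthonormal_e orthonormal_f by (simp add: braket_tensor_ket orthonormal_family_braket)

lemma braket_product_basis_schmidt_state:
  assumes "j < n" "k < n"
  shows "braket (tensor_ket (e j) (f k)) schmidt_state = (if j = k then complex_of_real (c j) else 0)"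
  using assms unfolding schmidt_state_def braket_sum_right
  by (cases "j = k") (auto simp: braket_product_basis if_distrib[of "\<lambda>z. _ * z"] cong: if_cong intro!: sum.neutral)

lemma braket_schmidt_state_product_basis:
  "j < n \<Longrightarrow> k < n \<Longrightarrow> braket schmidt_state (tensor_ket (e j) (f k)) = (if j = k then complex_of_real (c j) else 0)"
  by (subst braket_swap) (simp add: braket_product_basis_schmidt_state)

lemma braket_schmidt_state: "braket schmidt_state schmidt_state = (\<Sum>j<n. (c j)\<^sup>2)"
proof -
  have "braket schmidt_state schmidt_state = (\<Sum>j<n. complex_of_real (c j) * braket schmidt_state (tensor_ket (e j) (f j)))"
    by (subst (2) schmidt_state_def) (rule braket_sum_right)
  then show ?thesis
    by (simp add: braket_schmidt_state_product_basis power2_eq_square)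
qed

lemma schmidt_witness_schmidt_state: "schmidt_witness e f n (proj schmidt_state) = - cross_sum"
proof -
  have "schmidt_witness e f n (proj schmidt_state) =
      (\<Sum>j<n. \<Sum>k<n. - complex_of_real (if j = k then 0 else c j * c k))"
    unfolding schmidt_witness_def matrix_element_proj
    by (intro sum.cong refl)
      (auto simp: braket_schmidt_state_product_basis braket_product_basis_schmidt_state)
  then show ?thesis
    by (simp add: cross_sum_def sum_negf)
qed

lemma schmidt_witness_density_le:
  assumes "density \<sigma>"
  shows "Re (schmidt_witness e f n \<sigma>) \<le> 1"
proof -
  define \<Phi> where "\<Phi> = (\<lambda>x. \<Sum>j<n. tensor_ket (e j) (f j) x)"
  have "(\<Sum>j<n. \<Sum>k<n. matrix_element \<sigma> (tensor_ket (e k) (f k)) (tensor_ket (e j) (f j)))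
      = matrix_element \<sigma> \<Phi> \<Phi>"
    unfolding \<Phi>_def matrix_element_sum_left_right by (rule sum.swap)
  then have "schmidt_witness e f n \<sigma> =
      (\<Sum>(j, k)\<in>{..<n} \<times> {..<n}. matrix_element \<sigma> (tensor_ket (e j) (f k)) (tensor_ket (e j) (f k)))
      - matrix_element \<sigma> \<Phi> \<Phi>"
    unfolding schmidt_witness_def sum_subtractf by (simp add: sum.cartesian_product)
  moreover have "Re (\<Sum>(j, k)\<in>{..<n} \<times> {..<n}. matrix_element \<sigma> (tensor_ket (e j) (f k)) (tensor_ket (e j) (f k)))
      \<le> Re (trace \<sigma>)"
    using assms psd_sum_matrix_element_le_trace[of "{..<n} \<times> {..<n}" "\<lambda>(j, k). tensor_ket (e j) (f k)" \<sigma>]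
    by (auto simp: density_def braket_product_basis split_def)
  moreover have "0 \<le> Re (matrix_element \<sigma> \<Phi> \<Phi>)"
    using assms by (simp add: density_def psd_matrix_element_nonneg)
  ultimately show ?thesis
    using assms by (simp add: density_def)
qed

lemma cross_sum_le_of_separable_mixture:
  assumes "density \<sigma>" and "0 \<le> t" and "separable (robustness_mixture t (proj schmidt_state) \<sigma>)"
  shows "cross_sum \<le> t"
proof -
  have "0 \<le> Re (schmidt_witness e f n (robustness_mixture t (proj schmidt_state) \<sigma>))"
    using assms(3) by (rule schmidt_witness_separable_nonneg)
  also have "\<dots> = (t * Re (schmidt_witness e f n \<sigma>) - cross_sum) / (1 + t)"
    unfolding schmidt_witness_combination schmidt_witness_schmidt_state by (simp add: diff_divide_distrib)
  also have "\<dots> \<le> (t - cross_sum) / (1 + t)"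
    using schmidt_witness_density_le[OF assms(1)] assms(2)
    by (intro divide_right_mono diff_right_mono) (auto intro: mult_left_le)
  finally show ?thesis
    using assms(2) by (simp add: zero_le_divide_iff)
qed

end

section \<open>Phase twirling of a normalized Schmidt state\<close>

locale normalized_schmidt_decomposition = schmidt_decomposition +
  assumes sum_squares: "(\<Sum>j<n. (c j)\<^sup>2) = 1"
begin

definition schmidt_sum :: real where
  "schmidt_sum = (\<Sum>j<n. c j)"

lemma schmidt_sum_square: "schmidt_sum\<^sup>2 = 1 + cross_sum"
proof -
  have "schmidt_sum\<^sup>2 = (\<Sum>j<n. \<Sum>k<n. (if j = k then 0 else c j * c k) + (if j = k then c j * c k else 0))"
    unfolding schmidt_sum_def power2_eq_square sum_product by (intro sum.cong refl) simp
  also have "\<dots> = cross_sum + (\<Sum>j<n. (c j)\<^sup>2)"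
    by (simp add: cross_sum_def sum.distrib power2_eq_square)
  finally show ?thesis
    using sum_squares by simp
qed

lemma schmidt_sum_pos: "0 < schmidt_sum"
proof -
  have "0 \<le> schmidt_sum"
    unfolding schmidt_sum_def using c_nonneg by (auto intro: sum_nonneg)
  moreover have "schmidt_sum \<noteq> 0"
    using schmidt_sum_square cross_sum_nonneg by auto
  ultimately show ?thesis by simp
qed

definition amplitude :: "nat \<Rightarrow> real" where
  "amplitude j = sqrt (c j / schmidt_sum)"

lemma amplitude_square: "j < n \<Longrightarrow> amplitude j * amplitude j = c j / schmidt_sum"
  unfolding amplitude_def using c_nonneg schmidt_sum_pos by simp

definition phase_ket_A :: "(nat \<Rightarrow> complex) \<Rightarrow> 'a \<Rightarrow> complex" where
  "phase_ket_A \<phi> = (\<lambda>x. \<Sum>j<n. (complex_of_real (amplitude j) * \<phi> j) * e j x)"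

definition phase_ket_B :: "(nat \<Rightarrow> complex) \<Rightarrow> 'b \<Rightarrow> complex" where
  "phase_ket_B \<phi> = (\<lambda>y. \<Sum>j<n. (complex_of_real (amplitude j) * cnj (\<phi> j)) * f j y)"

lemma sum_amplitude_squares: "(\<Sum>j<n. complex_of_real (amplitude j * amplitude j)) = 1"
proof -
  have "(\<Sum>j<n. amplitude j * amplitude j) = 1"
    using schmidt_sum_pos by (simp add: amplitude_square sum_divide_distrib[symmetric] schmidt_sum_def)
  then show ?thesis
    by (metis of_real_1 of_real_sum)
qed

lemma braket_phase_kets:
  assumes "\<phi> \<in> {..<n} \<rightarrow>\<^sub>E quarter_phases"
  shows "braket (phase_ket_A \<phi>) (phase_ket_A \<phi>) = 1" "braket (phase_ket_B \<phi>) (phase_ket_B \<phi>) = 1"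
proof -
  have phase_sum: "(\<Sum>j<n. cnj (complex_of_real (amplitude j) * z j) * (complex_of_real (amplitude j) * z j)) = 1"
    if "\<And>j. j < n \<Longrightarrow> cnj (z j) * z j = 1" for z
  proof -
    have "cnj (complex_of_real (amplitude j) * z j) * (complex_of_real (amplitude j) * z j)
        = complex_of_real (amplitude j * amplitude j) * (cnj (z j) * z j)" for j
      by (simp add: mult_ac)
    then have "(\<Sum>j<n. cnj (complex_of_real (amplitude j) * z j) * (complex_of_real (amplitude j) * z j))
        = (\<Sum>j<n. complex_of_real (amplitude j * amplitude j) * (cnj (z j) * z j))"
      by (simp only:)
    also have "\<dots> = (\<Sum>j<n. complex_of_real (amplitude j * amplitude j))"
      using that by (intro sum.cong refl) simp
    finally show ?thesis
      by (simp only: sum_amplitude_squares)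
  qed
  have "cnj (\<phi> j) * \<phi> j = 1" "cnj (cnj (\<phi> j)) * cnj (\<phi> j) = 1" if "j < n" for j
    using assms that quarter_phase_cnj_mult[of "\<phi> j"] by (auto simp: mult.commute)
  then show "braket (phase_ket_A \<phi>) (phase_ket_A \<phi>) = 1" "braket (phase_ket_B \<phi>) (phase_ket_B \<phi>) = 1"
    unfolding phase_ket_A_def phase_ket_B_def
      braket_orthonormal_combination[OF orthonormal_e] braket_orthonormal_combination[OF orthonormal_f]
    by (simp_all only: phase_sum)
qed

lemma tensor_ket_phase_kets:
  "tensor_ket (phase_ket_A \<phi>) (phase_ket_B \<phi>) =
    (\<lambda>x. \<Sum>j<n. \<Sum>k<n. complex_of_real (amplitude j * amplitude k) * (\<phi> j * cnj (\<phi> k)) * tensor_ket (e j) (f k) x)"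
  by (auto simp: fun_eq_iff phase_ket_A_def phase_ket_B_def sum_product mult_ac)

definition cross_weight :: "nat \<times> nat \<Rightarrow> real" where
  "cross_weight jk = (if fst jk = snd jk then 0 else c (fst jk) * c (snd jk))"

definition cross_part :: "('a \<times> 'b) op" where
  "cross_part = (\<lambda>x y. \<Sum>jk\<in>{..<n} \<times> {..<n}.
     complex_of_real (cross_weight jk) * tensor_op (proj (e (fst jk))) (proj (f (snd jk))) x y)"

definition twirled_state :: "('a \<times> 'b) op" where
  "twirled_state = (\<lambda>x y. complex_of_real (1 / schmidt_sum\<^sup>2) * (proj schmidt_state x y + cross_part x y))"

lemma phase_twirl:
  "(\<Sum>\<phi>\<in>{..<n} \<rightarrow>\<^sub>E quarter_phases.
      complex_of_real (1 / 4 ^ n) * tensor_op (proj (phase_ket_A \<phi>)) (proj (phase_ket_B \<phi>)) x y)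
    = twirled_state x y"
proof -
  define F where "F j k j' k' = complex_of_real (amplitude j * amplitude k * amplitude j' * amplitude k')
      * (tensor_ket (e j) (f k) x * cnj (tensor_ket (e j') (f k') y))" for j k j' k'
  have expand: "tensor_op (proj (phase_ket_A \<phi>)) (proj (phase_ket_B \<phi>)) x y
      = (\<Sum>j<n. \<Sum>k<n. \<Sum>j'<n. \<Sum>k'<n. F j k j' k' * (\<phi> j * cnj (\<phi> k) * cnj (\<phi> j') * \<phi> k'))" for \<phi>
    unfolding tensor_op_proj tensor_ket_phase_kets proj_double_sum F_def
    by (intro sum.cong refl) (simp add: mult_ac)
  have twirl: "(\<Sum>\<phi>\<in>{..<n} \<rightarrow>\<^sub>E quarter_phases.
      complex_of_real (1 / 4 ^ n) * tensor_op (proj (phase_ket_A \<phi>)) (proj (phase_ket_B \<phi>)) x y)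
    = (\<Sum>j<n. \<Sum>j'<n. F j j j' j') + ((\<Sum>j<n. \<Sum>k<n. F j k j k) - (\<Sum>j<n. F j j j j))"
    unfolding expand sum_distrib_left[symmetric] quarter_phase_average by simp
  have "(\<Sum>j<n. \<Sum>j'<n. F j j j' j') = (\<Sum>j<n. \<Sum>j'<n. complex_of_real (1 / schmidt_sum\<^sup>2) *
      (complex_of_real (c j) * tensor_ket (e j) (f j) x * cnj (complex_of_real (c j') * tensor_ket (e j') (f j') y)))"
    unfolding F_def by (intro sum.cong refl) (simp add: amplitude_square power2_eq_square mult_ac)
  also have "\<dots> = complex_of_real (1 / schmidt_sum\<^sup>2) * proj schmidt_state x y"
    unfolding sum_distrib_left[symmetric] proj_def schmidt_state_def cnj_sum sum_product ..
  finally have coherent: "(\<Sum>j<n. \<Sum>j'<n. F j j j' j') = complex_of_real (1 / schmidt_sum\<^sup>2) * proj schmidt_state x y" .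
  have "(\<Sum>j<n. \<Sum>k<n. F j k j k) - (\<Sum>j<n. F j j j j)
      = (\<Sum>j<n. \<Sum>k<n. F j k j k - (if j = k then F j k j k else 0))"
    by (simp add: sum_subtractf)
  also have "\<dots> = (\<Sum>j<n. \<Sum>k<n. if j = k then 0 else F j k j k)"
    by (intro sum.cong refl) simp
  also have "\<dots> = complex_of_real (1 / schmidt_sum\<^sup>2) * cross_part x y"
    unfolding cross_part_def cross_weight_def sum.cartesian_product' sum_distrib_left F_def tensor_op_proj
    by (intro sum.cong refl) (simp add: amplitude_square proj_def power2_eq_square mult_ac)
  finally show ?thesis
    unfolding twirl coherent twirled_state_def by (simp add: distrib_left)
qed

lemma separable_twirled_state: "separable twirled_state"
proof -
  have "separable (\<lambda>x y. \<Sum>\<phi>\<in>{..<n} \<rightarrow>\<^sub>E quarter_phases.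
      complex_of_real (1 / 4 ^ n) * tensor_op (proj (phase_ket_A \<phi>)) (proj (phase_ket_B \<phi>)) x y)"
    by (rule separable_mixture)
      (auto simp: card_quarter_phase_vectors density_proj braket_phase_kets finite_PiE)
  then show ?thesis
    by (simp only: phase_twirl)
qed

lemma sum_cross_weight: "(\<Sum>jk\<in>{..<n} \<times> {..<n}. cross_weight jk) = cross_sum"
  unfolding cross_sum_def cross_weight_def sum.cartesian_product' fst_conv snd_conv ..

lemma cross_weight_nonneg: "jk \<in> {..<n} \<times> {..<n} \<Longrightarrow> 0 \<le> cross_weight jk"
  using c_nonneg by (auto simp: cross_weight_def)

lemma separable_schmidt_state_if_cross_sum_zero:
  assumes "cross_sum = 0"
  shows "separable (proj schmidt_state)"
proof -
  have "\<forall>jk\<in>{..<n} \<times> {..<n}. cross_weight jk = 0"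
    using sum_nonneg_eq_0_iff[of "{..<n} \<times> {..<n}" cross_weight] cross_weight_nonneg sum_cross_weight assms
    by simp
  then have "cross_part = (\<lambda>x y. 0)"
    unfolding cross_part_def by (intro ext sum.neutral) auto
  with assms have "twirled_state = proj schmidt_state"
    by (simp add: twirled_state_def schmidt_sum_square)
  then show ?thesis
    using separable_twirled_state by simp
qed

text \<open>Only a state when cross_sum > 0; otherwise the division makes it 0.\<close>
definition cross_state :: "('a \<times> 'b) op" where
  "cross_state = (\<lambda>x y. \<Sum>jk\<in>{..<n} \<times> {..<n}.
     complex_of_real (cross_weight jk / cross_sum) * tensor_op (proj (e (fst jk))) (proj (f (snd jk))) x y)"

lemma cross_state_weights:
  assumes "0 < cross_sum"
  shows "\<forall>jk\<in>{..<n} \<times> {..<n}. 0 \<le> cross_weight jk / cross_sum"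
    and "(\<Sum>jk\<in>{..<n} \<times> {..<n}. cross_weight jk / cross_sum) = 1"
  using assms cross_weight_nonneg by (simp_all add: sum_divide_distrib[symmetric] sum_cross_weight)

lemma density_cross_state: "0 < cross_sum \<Longrightarrow> density cross_state"
  unfolding cross_state_def using cross_state_weights
  by (intro density_mixture) (auto simp: tensor_op_proj braket_product_basis intro!: density_proj)

lemma separable_cross_state: "0 < cross_sum \<Longrightarrow> separable cross_state"
  unfolding cross_state_def using cross_state_weights orthonormal_e orthonormal_f
  by (intro separable_mixture) (auto simp: orthonormal_family_braket intro!: density_proj)

lemma robustness_mixture_cross_state:
  assumes "0 < cross_sum"
  shows "robustness_mixture cross_sum (proj schmidt_state) cross_state = twirled_state"
proof (intro ext)
  fix x y
  have "cross_sum / (1 + cross_sum) * (w / cross_sum) = 1 / (1 + cross_sum) * w" for w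
    using assms by (simp add: field_simps)
  then have "complex_of_real (cross_sum / (1 + cross_sum)) * cross_state x y
      = complex_of_real (1 / (1 + cross_sum)) * cross_part x y"
    unfolding cross_state_def cross_part_def sum_distrib_left
    by (intro sum.cong refl) (simp only: mult.assoc[symmetric] flip: of_real_mult)
  then show "robustness_mixture cross_sum (proj schmidt_state) cross_state x y = twirled_state x y"
    by (simp add: twirled_state_def schmidt_sum_square distrib_left)
qed

lemma exists_separable_mixing_state:
  "\<exists>\<sigma>. density \<sigma> \<and> separable \<sigma> \<and> separable (robustness_mixture cross_sum (proj schmidt_state) \<sigma>)"
proof (cases "cross_sum = 0")
  case True
  moreover have "density (proj schmidt_state)"
    by (rule density_proj) (simp add: braket_schmidt_state sum_squares)
  ultimately show ?thesis
    using separable_schmidt_state_if_cross_sum_zero by auto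
next
  case False
  then have pos: "0 < cross_sum"
    using cross_sum_nonneg by simp
  have "separable (robustness_mixture cross_sum (proj schmidt_state) cross_state)"
    unfolding robustness_mixture_cross_state[OF pos] by (rule separable_twirled_state)
  then show ?thesis
    using density_cross_state[OF pos] separable_cross_state[OF pos] by blast
qed

end

theorem mainTheorem4:
  fixes \<psi> :: "('a::finite \<times> 'b::finite) \<Rightarrow> complex"
    and n :: nat and c :: "nat \<Rightarrow> real"
    and e :: "nat \<Rightarrow> 'a \<Rightarrow> complex" and f :: "nat \<Rightarrow> 'b \<Rightarrow> complex"
  assumes unit: "(\<Sum>i\<in>UNIV. cmod (\<psi> i) ^ 2) = 1"
    and e_on: "orthonormal_family n e"
    and f_on: "orthonormal_family n f"
    and c_nonneg: "\<forall>j<n. 0 \<le> c j"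
    and schmidt: "\<psi> = (\<lambda>(a, b). \<Sum>j<n. complex_of_real (c j) * e j a * f j b)"
  shows "global_robustness (proj \<psi>) = ereal ((\<Sum>j<n. c j)^2 - 1)
       \<and> robustness (proj \<psi>) = ereal ((\<Sum>j<n. c j)^2 - 1)"
proof -
  interpret schmidt_decomposition e f n c
    using e_on f_on c_nonneg by unfold_locales auto
  have \<psi>: "\<psi> = schmidt_state"
    unfolding schmidt schmidt_state_def by (auto simp: fun_eq_iff mult.assoc)
  have "complex_of_real (\<Sum>j<n. (c j)\<^sup>2) = complex_of_real 1"
    using braket_self[of \<psi>] unit unfolding \<psi> braket_schmidt_state by simp
  then interpret normalized_schmidt_decomposition e f n c
    by unfold_locales (simp only: of_real_eq_iff)
  have cross_sum: "(\<Sum>j<n. c j)^2 - 1 = cross_sum"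
    using schmidt_sum_square by (simp add: schmidt_sum_def)
  have lower: "ereal cross_sum \<le> global_robustness (proj schmidt_state)"
    unfolding global_robustness_def
    by (auto intro!: Inf_greatest rel_robustness_ge cross_sum_le_of_separable_mixture)
  obtain \<sigma> where "density \<sigma>" "separable \<sigma>" "separable (robustness_mixture cross_sum (proj schmidt_state) \<sigma>)"
    using exists_separable_mixing_state by blast
  then have upper: "robustness (proj schmidt_state) \<le> ereal cross_sum"
    unfolding robustness_def using cross_sum_nonneg by (blast intro: Inf_lower2 rel_robustness_le)
  show ?thesis
    using lower upper global_robustness_le_robustness[of "proj schmidt_state"]
    unfolding \<psi> cross_sum by (metis antisym order_trans)
qed

end
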